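(* Let $m$ be a positive integer and let $\phi_1,\phi_2,\phi_3$ be pairwise distinct permutations of $\mathbb{F}_{2^m}$ such that $\psi=\phi_1+\phi_2+\phi_3$ is a permutation of $\mathbb{F}_{2^m}$ and $\psi^{-1}=\phi_1^{-1}+\phi_2^{-1}+\phi_3^{-1}$. Let $h_1,h_2,h_3:\mathbb{F}_{2^m}\to\mathbb{F}_2$ and define $f_j:\mathbb{F}_{2^m}\times\mathbb{F}_{2^m}\to\mathbb{F}_2$ by $f_j(x,y)=Tr(x\phi_j(y))+h_j(y)$ for $j=1,2,3$. Suppose that for all $x\in\mathbb{F}_{2^m}$, $$h_1(\phi_1^{-1}(x))+h_2(\phi_2^{-1}(x))+h_3(\phi_3^{-1}(x))+(h_1+h_2+h_3)(\psi^{-1}(x))=1.$$ Then $f_1,f_2,f_3$ and $f_4=f_1+f_2+f_3$ are bent and $f_1^*+f_2^*+f_3^*+f_4^*=1$ identically.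
   Context: $Tr$ denotes the absolute trace $\mathbb{F}_{2^m}\to\mathbb{F}_2$. A Boolean function $F:\mathbb{F}_{2^m}\times\mathbb{F}_{2^m}\to\mathbb{F}_2$ is bent if its Walsh transform $W_F(a,b)=\sum_{x,y}(-1)^{F(x,y)+Tr(ax+by)}$ satisfies $|W_F(a,b)|=2^m$ for all $(a,b)$; its dual $F^*$ is the Boolean function defined by $W_F(a,b)=2^m(-1)^{F^*(a,b)}$. *)

theory Defs
  imports Main "HOL-Library.Z2"
begin

text \<open>The finite field F_{2^m} is modelled by an arbitrary finite field type 'a of
characteristic 2 with CARD('a) = 2^m; F_2 is the type bit from HOL-Library.Z2.\<close>

definition field_trace :: "nat \<Rightarrow> 'a::field \<Rightarrow> 'a" where
  "field_trace m x = (\<Sum>i<m. x ^ (2 ^ i))"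

text \<open>Absolute trace F_{2^m} -> F_2 (its field value lies in {0,1}).\<close>
definition Tr :: "nat \<Rightarrow> 'a::field \<Rightarrow> bit" where
  "Tr m x = (if field_trace m x = 0 then 0 else 1)"

definition chi :: "bit \<Rightarrow> int" where
  "chi b = (if b = 0 then 1 else -1)"

definition walsh :: "nat \<Rightarrow> ('a::{field,finite} \<Rightarrow> 'a \<Rightarrow> bit) \<Rightarrow> 'a \<Rightarrow> 'a \<Rightarrow> int" where
  "walsh m F a b = (\<Sum>x\<in>UNIV. \<Sum>y\<in>UNIV. chi (F x y + Tr m (a * x + b * y)))"

definition bent :: "nat \<Rightarrow> ('a::{field,finite} \<Rightarrow> 'a \<Rightarrow> bit) \<Rightarrow> bool" where
  "bent m F \<longleftrightarrow> (\<forall>a b. \<bar>walsh m F a b\<bar> = 2 ^ m)"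

definition dual :: "nat \<Rightarrow> ('a::{field,finite} \<Rightarrow> 'a \<Rightarrow> bit) \<Rightarrow> 'a \<Rightarrow> 'a \<Rightarrow> bit" where
  "dual m F a b = (if walsh m F a b = 2 ^ m then 0 else 1)"

end

theory Submission
  imports Defs "HOL-Computational_Algebra.Polynomial" "HOL-Computational_Algebra.Primes"
begin

text \<open>A function f(x,y) = Tr(x \<phi>(y)) + h(y) with \<phi> bijective is of Maiorana-McFarland type:
  summing over x first, the character sum of Tr((\<phi>(y) + a) x) vanishes unless \<phi>(y) = a, so
  W_f(a,b) = 2^m (-1)^{h(\<phi>^{-1}(a)) + Tr(b \<phi>^{-1}(a))}. Hence f is bent with dual
  f*(a,b) = h(\<phi>^{-1}(a)) + Tr(b \<phi>^{-1}(a)). Since Tr is additive, f4 is again of this type,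
  with \<psi> and h1 + h2 + h3. Adding the four duals, the hypothesis on \<psi>^{-1} makes the trace
  terms cancel in pairs and the hypothesis on the h_j leaves the constant 1.\<close>

text \<open>Keep + and * on bit as ring operations instead of letting simp turn them into xor/and.\<close>

declare add_bit_eq_xor [simp del] mult_bit_eq_and [simp del]

lemma bit_add_self [simp]: "(x::bit) + x = 0"
  by (cases x) simp_all

lemma chi_add: "chi (u + v) = chi u * chi v"
  by (cases u; cases v) (simp_all add: chi_def)

lemma chi_add_1: "chi (b + 1) = - chi b"
  by (cases b) (simp_all add: chi_def)

lemma CHAR_eq_2: "(2::'a::{semiring_1,zero_neq_one}) = 0 \<Longrightarrow> CHAR('a) = 2"
  by (rule CHAR_eq_posI) (auto simp: less_2_cases_iff)

text \<open>Primes proves this as finite_field_power_card_eq_same, but only for the sort finite_field.\<close>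

lemma power_card_UNIV_eq_self:
  fixes x :: "'a::{field,finite}"
  shows "x ^ card (UNIV::'a set) = x"
proof (cases "x = 0")
  case False
  let ?U = "UNIV - {0::'a}"
  have "(\<Prod>y\<in>?U. x * y) = (\<Prod>y\<in>?U. y)"
    by (rule prod.reindex_bij_witness[of _ "\<lambda>y. y / x" "\<lambda>y. x * y"]) (use False in auto)
  then have "x ^ card ?U * (\<Prod>y\<in>?U. y) = 1 * (\<Prod>y\<in>?U. y)"
    by (simp add: prod.distrib)
  then have "x ^ card ?U = 1"
    by (subst (asm) mult_cancel_right) simp
  moreover have "card ?U = card (UNIV::'a set) - 1"
    by (simp add: card_Diff_singleton)
  moreover have "card (UNIV::'a set) = Suc (card (UNIV::'a set) - 1)"
    using finite_UNIV_card_ge_0[where 'a='a] by simp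
  ultimately show ?thesis
    by (metis power_Suc mult_1_right)
qed (simp add: finite_UNIV_card_ge_0)

lemma field_trace_add:
  fixes x y :: "'a::field"
  assumes "(2::'a) = 0"
  shows "field_trace m (x + y) = field_trace m x + field_trace m y"
proof -
  have "(x + y) ^ (2 ^ i) = x ^ (2 ^ i) + y ^ (2 ^ i)" for i
    by (rule freshmans_dream') (simp_all add: CHAR_eq_2[OF assms])
  then show ?thesis
    by (simp add: field_trace_def sum.distrib)
qed

lemma field_trace_square:
  fixes x :: "'a::{field,finite}"
  assumes char2: "(2::'a) = 0" and card: "card (UNIV::'a set) = 2 ^ m"
  shows "(field_trace m x) ^ 2 = field_trace m x"
proof -
  have "(field_trace m x) ^ 2 = (\<Sum>i<m. x ^ (2 ^ Suc i))"
    unfolding field_trace_def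
    by (subst freshmans_dream_sum'[where n = 1])
       (simp_all add: CHAR_eq_2[OF char2] power_mult[symmetric] mult.commute)
  also have "\<dots> = (\<Sum>i<Suc m. x ^ (2 ^ i)) - x"
    by (simp only: sum.lessThan_Suc_shift) simp
  also have "\<dots> = field_trace m x"
    using power_card_UNIV_eq_self[of x] by (simp add: field_trace_def card)
  finally show ?thesis .
qed

lemma field_trace_0_or_1:
  fixes x :: "'a::{field,finite}"
  assumes "(2::'a) = 0" and "card (UNIV::'a set) = 2 ^ m"
  shows "field_trace m x = 0 \<or> field_trace m x = 1"
proof -
  have "field_trace m x * (field_trace m x - 1) = 0"
    using field_trace_square[OF assms, of x] by (simp add: algebra_simps power2_eq_square)
  then show ?thesis
    by simp
qed

lemma Tr_add:
  fixes x y :: "'a::{field,finite}"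
  assumes char2: "(2::'a) = 0" and card: "card (UNIV::'a set) = 2 ^ m"
  shows "Tr m (x + y) = Tr m x + Tr m y"
  using field_trace_0_or_1[OF assms, of x] field_trace_0_or_1[OF assms, of y] char2
  by (auto simp: Tr_def field_trace_add[OF char2])

lemma Tr_zero [simp]: "Tr m 0 = 0"
  by (simp add: Tr_def field_trace_def zero_power)

text \<open>The trace is a polynomial of degree 2^{m-1}, so it cannot vanish on all 2^m points.\<close>

lemma Tr_eq_1_exists:
  assumes "0 < m" and card: "card (UNIV::'a::{field,finite} set) = 2 ^ m"
  shows "\<exists>d::'a. Tr m d = 1"
proof (rule ccontr)
  assume "\<nexists>d::'a. Tr m d = 1"
  then have trace_zero: "field_trace m d = 0" for d :: 'a
    by (auto simp: Tr_def split: if_splits)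
  define p :: "'a poly" where "p = (\<Sum>i<m. monom 1 (2 ^ i))"
  have "p \<noteq> 0"
  proof -
    have "coeff p (2 ^ (m - 1)) = (\<Sum>i<m. if i = m - 1 then 1 else 0)"
      unfolding p_def coeff_sum coeff_monom by (rule sum.cong) auto
    then show ?thesis
      using \<open>0 < m\<close> by auto
  qed
  have "{x. poly p x = 0} = UNIV"
    using trace_zero by (simp add: p_def poly_sum poly_monom field_trace_def)
  then have "card (UNIV::'a set) \<le> degree p"
    using card_poly_roots_bound[OF \<open>p \<noteq> 0\<close>] by simp
  also have "degree p \<le> 2 ^ (m - 1)"
    unfolding p_def by (rule degree_sum_le) (auto intro: order_trans[OF degree_monom_le])
  finally show False
    using \<open>0 < m\<close> by (simp add: card)
qed

lemma sum_chi_additive_eq_0: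
  fixes T :: "'a::{ab_group_add,finite} \<Rightarrow> bit"
  assumes additive: "\<And>x y. T (x + y) = T x + T y" and "T d = 1"
  shows "(\<Sum>x\<in>UNIV. chi (T x)) = 0"
proof -
  have "(\<Sum>x\<in>UNIV. chi (T x)) = (\<Sum>x\<in>UNIV. chi (T (x + d)))"
    by (rule sum.reindex_bij_witness[of _ "\<lambda>x. x + d" "\<lambda>x. x - d"]) auto
  also have "\<dots> = - (\<Sum>x\<in>UNIV. chi (T x))"
    by (simp add: additive \<open>T d = 1\<close> chi_add_1 sum_negf)
  finally show ?thesis
    by simp
qed

lemma sum_chi_Tr_mult:
  fixes c :: "'a::{field,finite}"
  assumes "0 < m" and char2: "(2::'a) = 0" and card: "card (UNIV::'a set) = 2 ^ m"
  shows "(\<Sum>x\<in>UNIV. chi (Tr m (c * x))) = (if c = 0 then 2 ^ m else 0)"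
proof (cases "c = 0")
  case True
  then show ?thesis
    by (simp add: card chi_def)
next
  case False
  obtain d :: 'a where "Tr m d = 1"
    using Tr_eq_1_exists[OF \<open>0 < m\<close> card] by blast
  have "(\<Sum>x\<in>UNIV. chi (Tr m (c * x))) = 0"
    by (rule sum_chi_additive_eq_0[where d = "d / c"])
       (use False \<open>Tr m d = 1\<close> in \<open>simp_all add: distrib_left Tr_add[OF char2 card]\<close>)
  with False show ?thesis
    by simp
qed

lemma walsh_maiorana_mcfarland:
  fixes \<phi> :: "'a::{field,finite} \<Rightarrow> 'a" and h :: "'a \<Rightarrow> bit"
  assumes "0 < m" and char2: "(2::'a) = 0" and card: "card (UNIV::'a set) = 2 ^ m"
    and "bij \<phi>"
  shows "walsh m (\<lambda>x y. Tr m (x * \<phi> y) + h y) a b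
         = 2 ^ m * chi (h (inv \<phi> a) + Tr m (b * inv \<phi> a))"
proof -
  let ?g = "\<lambda>y. chi (h y + Tr m (b * y))"
  have split: "Tr m (x * \<phi> y) + h y + Tr m (a * x + b * y)
             = (h y + Tr m (b * y)) + Tr m ((\<phi> y + a) * x)" for x y
    by (simp add: Tr_add[OF char2 card] algebra_simps)
  have zero_iff: "\<phi> y + a = 0 \<longleftrightarrow> y = inv \<phi> a" for y
  proof -
    have "\<phi> y + a = 0 \<longleftrightarrow> \<phi> y = a"
      using char2 by (metis add_right_cancel mult_2 mult_zero_left)
    then show ?thesis
      using bij_inv_eq_iff[OF \<open>bij \<phi>\<close>] by metis
  qed
  have "walsh m (\<lambda>x y. Tr m (x * \<phi> y) + h y) a b
      = (\<Sum>y\<in>UNIV. ?g y * (\<Sum>x\<in>UNIV. chi (Tr m ((\<phi> y + a) * x))))"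
    unfolding walsh_def split chi_add
    by (subst sum.swap) (simp add: sum_distrib_left)
  also have "\<dots> = (\<Sum>y\<in>UNIV. if y = inv \<phi> a then ?g y * 2 ^ m else 0)"
    by (rule sum.cong) (simp_all add: sum_chi_Tr_mult[OF \<open>0 < m\<close> char2 card] zero_iff)
  finally show ?thesis
    by simp
qed

lemma bent_dual_if_walsh_eq:
  assumes "\<And>a b. walsh m F a b = 2 ^ m * chi (S a b)"
  shows "bent m F" and "dual m F = S"
  using assms by (auto simp: bent_def dual_def chi_def fun_eq_iff)

lemma bit_add_cancel_pairs:
  fixes A1 A2 A3 H T1 T2 T3 :: bit
  shows "(A1 + T1) + (A2 + T2) + (A3 + T3) + (H + (T1 + T2 + T3)) = A1 + A2 + A3 + H"
proof -
  have "(A1 + T1) + (A2 + T2) + (A3 + T3) + (H + (T1 + T2 + T3))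
     = (A1 + A2 + A3 + H) + (T1 + T1) + (T2 + T2) + (T3 + T3)"
    by (simp only: ac_simps)
  then show ?thesis
    by simp
qed

theorem theorem7:
  fixes m :: nat
    and \<phi>1 \<phi>2 \<phi>3 :: "'a::{field,finite} \<Rightarrow> 'a"
    and h1 h2 h3 :: "'a \<Rightarrow> bit"
  assumes m_pos: "0 < m"
    and card: "card (UNIV :: 'a set) = 2 ^ m"
    and char2: "(2::'a) = 0"
    and bij1: "bij \<phi>1" and bij2: "bij \<phi>2" and bij3: "bij \<phi>3"
    and dist: "\<phi>1 \<noteq> \<phi>2" "\<phi>1 \<noteq> \<phi>3" "\<phi>2 \<noteq> \<phi>3"
    and psi_bij: "bij (\<lambda>x. \<phi>1 x + \<phi>2 x + \<phi>3 x)"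
    and psi_inv: "inv (\<lambda>x. \<phi>1 x + \<phi>2 x + \<phi>3 x) = (\<lambda>x. inv \<phi>1 x + inv \<phi>2 x + inv \<phi>3 x)"
    and hcond: "\<forall>x. h1 (inv \<phi>1 x) + h2 (inv \<phi>2 x) + h3 (inv \<phi>3 x)
                 + (h1 (inv (\<lambda>x. \<phi>1 x + \<phi>2 x + \<phi>3 x) x)
                    + h2 (inv (\<lambda>x. \<phi>1 x + \<phi>2 x + \<phi>3 x) x)
                    + h3 (inv (\<lambda>x. \<phi>1 x + \<phi>2 x + \<phi>3 x) x)) = 1"
  defines "f1 \<equiv> (\<lambda>x y. Tr m (x * \<phi>1 y) + h1 y)"
    and "f2 \<equiv> (\<lambda>x y. Tr m (x * \<phi>2 y) + h2 y)"
    and "f3 \<equiv> (\<lambda>x y. Tr m (x * \<phi>3 y) + h3 y)"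
    and "f4 \<equiv> (\<lambda>x y. (Tr m (x * \<phi>1 y) + h1 y) + (Tr m (x * \<phi>2 y) + h2 y) + (Tr m (x * \<phi>3 y) + h3 y))"
  shows "bent m f1 \<and> bent m f2 \<and> bent m f3 \<and> bent m f4 \<and>
         (\<forall>a b. dual m f1 a b + dual m f2 a b + dual m f3 a b + dual m f4 a b = 1)"
proof -
  let ?\<psi> = "\<lambda>x. \<phi>1 x + \<phi>2 x + \<phi>3 x"
  note walsh = walsh_maiorana_mcfarland[OF m_pos char2 card]
  note Tr_add = Tr_add[OF char2 card]
  have Tr_psi: "Tr m (x * ?\<psi> y) = Tr m (x * \<phi>1 y) + Tr m (x * \<phi>2 y) + Tr m (x * \<phi>3 y)"
    for x y by (simp only: distrib_left Tr_add)
  have "f4 = (\<lambda>x y. Tr m (x * ?\<psi> y) + (h1 y + h2 y + h3 y))"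
    unfolding f4_def Tr_psi by (simp only: ac_simps)
  then have W4: "walsh m f4 a b
      = 2 ^ m * chi ((\<lambda>y. h1 y + h2 y + h3 y) (inv ?\<psi> a) + Tr m (b * inv ?\<psi> a))" for a b
    using walsh[OF psi_bij] by simp
  note W1 = walsh[OF bij1, of h1, folded f1_def]
    and W2 = walsh[OF bij2, of h2, folded f2_def]
    and W3 = walsh[OF bij3, of h3, folded f3_def]
  have "dual m f1 a b + dual m f2 a b + dual m f3 a b + dual m f4 a b = 1" for a b
  proof -
    have "Tr m (b * inv ?\<psi> a) = Tr m (b * inv \<phi>1 a) + Tr m (b * inv \<phi>2 a) + Tr m (b * inv \<phi>3 a)"
      unfolding psi_inv by (simp only: distrib_left Tr_add)
    then show ?thesis
      unfolding bent_dual_if_walsh_eq(2)[OF W1] bent_dual_if_walsh_eq(2)[OF W2]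
        bent_dual_if_walsh_eq(2)[OF W3] bent_dual_if_walsh_eq(2)[OF W4]
      using hcond by (simp only: bit_add_cancel_pairs)
  qed
  then show ?thesis
    using bent_dual_if_walsh_eq(1)[OF W1] bent_dual_if_walsh_eq(1)[OF W2]
      bent_dual_if_walsh_eq(1)[OF W3] bent_dual_if_walsh_eq(1)[OF W4] by blast
qed

end
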